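(* Let $l,m,n$ be positive integers with $l > m\geq n\geq \frac{l}{2}$, and let $c_1,c_2\in\mathbb{Q}$ be constants. For $0\le k\le m$ and $r\in\{1,2\}$ write $$U_k^{(r)}:=c_1\bigl(H_{k+n}^{(r)} - H_{k+l-n-1}^{(r)}\bigr) + c_2 \bigl(H_{k+m}^{(r)} - H_{k+l-m-1}^{(r)}\bigr).$$ Then \begin{multline*} \sum_{k=0}^{n} \binom{m+k}{k} \binom{m}{k} \binom{n+k}{k} \binom{n}{k} \Bigl\{ \Bigl[1+k \bigl(H_{m+k}^{(1)} +H_{m-k}^{(1)} + H_{n+k}^{(1)} + H_{n-k}^{(1)} -4H_k^{(1)} \bigr)\Bigr] U_k^{(1)} - k\, U_k^{(2)} \Bigr\}\\ + \sum_{k=n+1}^{m} (-1)^{k-n} \binom{m+k}{k} \binom{m}{k} \binom{n+k}{k} \Big/ \binom{k-1}{n}\; U_k^{(1)} = 0. \end{multline*}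
   Context: For non-negative integers $i$ and $n$, the generalized harmonic sum is $H^{(i)}_{n}:=\sum_{j=1}^{n} j^{-i}$ for $n\ge 1$, and $H^{(i)}_{0}:=0$. An empty sum (e.g. the second sum when $m=n$) equals $0$. *)

theory Defs
  imports Complex_Main
begin

definition gharm :: "nat \<Rightarrow> nat \<Rightarrow> rat" where
  "gharm i n = (\<Sum>j = 1..n. 1 / (of_nat j) ^ i)"

definition Uk :: "rat \<Rightarrow> rat \<Rightarrow> nat \<Rightarrow> nat \<Rightarrow> nat \<Rightarrow> nat \<Rightarrow> nat \<Rightarrow> rat" where
  "Uk c1 c2 l m n r k =
     c1 * (gharm r (k + n) - gharm r (k + l - n - 1))
   + c2 * (gharm r (k + m) - gharm r (k + l - m - 1))"

end

theory Submission
  imports Defs "HOL-Complex_Analysis.Complex_Analysis"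
begin

(*
  For 1 <= j <= m consider the rational function

    F_j(t) = t * prod_{1 <= i <= m, i ~= j} (t + i) * prod_{i=1..n} (t + i)
             / (prod_{i=0..m} (t - i) * prod_{i=0..n} (t - i)).

  Its denominator has degree two more than its numerator, so the residues of F_j at its poles
  0, ..., m add up to zero (integrate over a large circle). For k <= n the pole at k is double;
  computing the residue through the logarithmic derivative of the cofactor gives (-1)^(m+n)
  times the k-th term of the first sum with U^(1)_k, U^(2)_k replaced by 1/(k+j), 1/(k+j)^2.
  For n < k <= m the pole is simple and gives the k-th term of the second sum. Finally U^(r)_k
  is a linear combination of the 1/(k+j)^r with j in [l-n, n] and [l-m, m], both contained in
  [1, m] by the hypotheses, and the left-hand side is linear in (U^(1), U^(2)).
*)

lemma norm_sum_residues_le: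
  fixes f :: "complex \<Rightarrow> complex"
  assumes "finite S" "f holomorphic_on - S" "R > 0"
    and inside: "\<And>p. p \<in> S \<Longrightarrow> norm p < R"
    and bound: "\<And>z. norm z = R \<Longrightarrow> norm (f z) \<le> B"
  shows "norm (\<Sum>p\<in>S. residue f p) \<le> B * R"
proof -
  define \<Sigma> where "\<Sigma> = (\<Sum>p\<in>S. residue f p)"
  have image: "path_image (circlepath 0 R) \<subseteq> - S"
  proof
    fix x assume "x \<in> path_image (circlepath 0 R)"
    hence "norm x = R" using \<open>R > 0\<close> by (simp add: path_image_circlepath)
    thus "x \<in> - S" using inside by force
  qed
  have "contour_integral (circlepath 0 R) f
        = 2 * pi * \<i> * (\<Sum>p\<in>S. winding_number (circlepath 0 R) p * residue f p)"
    by (rule Residue_theorem) (use assms image in \<open>auto simp: Compl_eq_Diff_UNIV\<close>)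
  also have "\<dots> = 2 * pi * \<i> * \<Sigma>"
    unfolding \<Sigma>_def using inside
    by (intro arg_cong[where f = "\<lambda>x. 2 * pi * \<i> * x"] sum.cong refl)
       (simp add: winding_number_circlepath)
  finally have "(f has_contour_integral 2 * pi * \<i> * \<Sigma>) (circlepath 0 R)"
    using holomorphic_on_subset[OF assms(2) image]
    by (metis contour_integrable_continuous_circlepath has_contour_integral_integral
        holomorphic_on_imp_continuous_on)
  moreover have "B \<ge> 0"
  proof -
    have "norm (f (of_real R)) \<le> B" using bound \<open>R > 0\<close> by simp
    thus ?thesis by (rule order_trans[OF norm_ge_zero])
  qed
  ultimately have "norm (2 * pi * \<i> * \<Sigma>) \<le> B * (2 * pi * R)"
    using \<open>R > 0\<close> bound by (intro has_contour_integral_bound_circlepath) auto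
  thus ?thesis unfolding \<Sigma>_def by (simp add: norm_mult)
qed

lemma sum_residues_eq_0_if_decay:
  fixes f :: "complex \<Rightarrow> complex"
  assumes "finite S" and holo: "f holomorphic_on - S"
    and decay: "\<And>z. norm z \<ge> R\<^sub>0 \<Longrightarrow> norm (f z) \<le> C / norm z ^ 2"
  shows "(\<Sum>p\<in>S. residue f p) = 0"
proof -
  define R\<^sub>1 where "R\<^sub>1 = max 1 (max R\<^sub>0 (1 + Max (insert 0 (norm ` S))))"
  have inside: "norm p < R" if "p \<in> S" "R \<ge> R\<^sub>1" for p R
  proof -
    have "norm p \<le> Max (insert 0 (norm ` S))"
      using \<open>finite S\<close> that(1) by (intro Max_ge) auto
    thus ?thesis using that(2) unfolding R\<^sub>1_def by linarith
  qed
  have bound: "norm (\<Sum>p\<in>S. residue f p) \<le> C / R" if "R \<ge> R\<^sub>1" for R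
  proof -
    have "R > 0" "R \<ge> R\<^sub>0" using that unfolding R\<^sub>1_def by auto
    have "norm (\<Sum>p\<in>S. residue f p) \<le> C / R ^ 2 * R"
    proof (rule norm_sum_residues_le[OF assms(1,2) \<open>R > 0\<close> inside[OF _ that]])
      show "norm (f z) \<le> C / R ^ 2" if "norm z = R" for z
        using decay[of z] that \<open>R \<ge> R\<^sub>0\<close> by simp
    qed
    thus ?thesis using \<open>R > 0\<close> by (simp add: power2_eq_square)
  qed
  have "eventually (\<lambda>R. norm (\<Sum>p\<in>S. residue f p) \<le> C / R) at_top"
    using eventually_ge_at_top[of R\<^sub>1] by (rule eventually_mono) (rule bound)
  moreover have "((\<lambda>R. C / R) \<longlongrightarrow> 0) at_top"
    by (intro tendsto_divide_0[OF tendsto_const] filterlim_at_top_imp_at_infinity filterlim_ident)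
  ultimately have "norm (\<Sum>p\<in>S. residue f p) \<le> 0"
    by (intro tendsto_le[OF _ _ tendsto_const]) auto
  thus ?thesis by simp
qed

lemma norm_prod_diff_le:
  fixes a :: "'i \<Rightarrow> 'a::real_normed_field"
  assumes "\<And>i. i \<in> I \<Longrightarrow> norm (a i) \<le> norm z"
  shows "norm (\<Prod>i\<in>I. z - a i) \<le> (2 * norm z) ^ card I"
proof -
  have "norm (\<Prod>i\<in>I. z - a i) \<le> (\<Prod>i\<in>I. norm (z - a i))" by (rule norm_prod_le)
  also have "\<dots> \<le> (\<Prod>i\<in>I. 2 * norm z)"
  proof (intro prod_mono conjI norm_ge_zero)
    fix i assume "i \<in> I"
    show "norm (z - a i) \<le> 2 * norm z"
      using norm_triangle_ineq4[of z "a i"] assms[OF \<open>i \<in> I\<close>] by linarith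
  qed
  finally show ?thesis by simp
qed

lemma norm_prod_diff_ge:
  fixes b :: "'i \<Rightarrow> 'a::real_normed_field"
  assumes "\<And>i. i \<in> J \<Longrightarrow> 2 * norm (b i) \<le> norm z"
  shows "(norm z / 2) ^ card J \<le> norm (\<Prod>i\<in>J. z - b i)"
proof -
  have "(\<Prod>i\<in>J. norm z / 2) \<le> (\<Prod>i\<in>J. norm (z - b i))"
  proof (intro prod_mono conjI)
    fix i assume "i \<in> J"
    show "norm z / 2 \<le> norm (z - b i)"
      using norm_triangle_ineq2[of z "b i"] assms[OF \<open>i \<in> J\<close>] by linarith
    show "0 \<le> norm z / 2" by simp
  qed
  thus ?thesis by (simp add: prod_norm)
qed

lemma rational_function_decay:
  fixes a :: "'i \<Rightarrow> complex" and b :: "'j \<Rightarrow> complex"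
  assumes "finite I" "finite J" and deg: "card I + 2 \<le> card J"
  obtains C R\<^sub>0 where
    "\<And>z. norm z \<ge> R\<^sub>0 \<Longrightarrow> norm ((\<Prod>i\<in>I. z - a i) / (\<Prod>i\<in>J. z - b i)) \<le> C / norm z ^ 2"
proof
  define M where "M = Max (insert 1 (norm ` a ` I \<union> norm ` b ` J))"
  have M: "M \<ge> 1" "\<And>i. i \<in> I \<Longrightarrow> norm (a i) \<le> M" "\<And>i. i \<in> J \<Longrightarrow> norm (b i) \<le> M"
    unfolding M_def using assms(1,2) by (auto intro: Max_ge)
  fix z :: complex assume "norm z \<ge> 2 * M"
  define R where "R = norm z"
  have "R \<ge> 1" "R \<ge> 2 * M" using M(1) \<open>norm z \<ge> 2 * M\<close> unfolding R_def by auto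
  have "norm ((\<Prod>i\<in>I. z - a i) / (\<Prod>i\<in>J. z - b i)) \<le> (2 * R) ^ card I / (R / 2) ^ card J"
  proof (unfold norm_divide R_def, intro frac_le norm_prod_diff_le norm_prod_diff_ge)
    show "norm (a i) \<le> norm z" if "i \<in> I" for i
      using M(1) M(2)[OF that] \<open>R \<ge> 2 * M\<close> unfolding R_def by linarith
    show "2 * norm (b i) \<le> norm z" if "i \<in> J" for i
      using M(3)[OF that] \<open>R \<ge> 2 * M\<close> unfolding R_def by linarith
  qed (use \<open>R \<ge> 1\<close> in \<open>auto simp: R_def intro!: zero_less_power\<close>)
  also have "\<dots> = 2 ^ (card I + card J) / R ^ 2 * (R ^ (card I + 2) / R ^ card J)"
    using \<open>R \<ge> 1\<close> by (simp add: power_mult_distrib power_divide power_add power2_eq_square field_simps)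
  also have "\<dots> \<le> 2 ^ (card I + card J) / R ^ 2"
  proof (rule mult_left_le)
    show "R ^ (card I + 2) / R ^ card J \<le> 1"
      using \<open>R \<ge> 1\<close> power_increasing[OF deg, of R] by simp
  qed simp
  finally show "norm ((\<Prod>i\<in>I. z - a i) / (\<Prod>i\<in>J. z - b i)) \<le> 2 ^ (card I + card J) / norm z ^ 2"
    unfolding R_def .
qed

lemma sum_residues_rational_function_eq_0:
  fixes a :: "'i \<Rightarrow> complex" and b :: "'j \<Rightarrow> complex"
  assumes "finite I" "finite J" and "card I + 2 \<le> card J"
  shows "(\<Sum>p\<in>b ` J. residue (\<lambda>z. (\<Prod>i\<in>I. z - a i) / (\<Prod>i\<in>J. z - b i)) p) = 0"
proof -
  obtain C R\<^sub>0 where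
    "\<And>z. norm z \<ge> R\<^sub>0 \<Longrightarrow> norm ((\<Prod>i\<in>I. z - a i) / (\<Prod>i\<in>J. z - b i)) \<le> C / norm z ^ 2"
    using rational_function_decay[OF assms, of a b] by blast
  moreover have "(\<lambda>z. (\<Prod>i\<in>I. z - a i) / (\<Prod>i\<in>J. z - b i)) holomorphic_on - b ` J"
    using \<open>finite J\<close> by (intro holomorphic_intros) auto
  ultimately show ?thesis
    using \<open>finite J\<close> by (intro sum_residues_eq_0_if_decay) auto
qed

lemma has_field_derivative_prod_diff:
  fixes c :: "'i \<Rightarrow> 'a::real_normed_field"
  assumes "\<And>i. i \<in> A \<Longrightarrow> z \<noteq> c i"
  shows "((\<lambda>t. \<Prod>i\<in>A. t - c i) has_field_derivative
           (\<Prod>i\<in>A. z - c i) * (\<Sum>i\<in>A. 1 / (z - c i))) (at z)"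
proof -
  have "((\<lambda>t. t - c i) has_field_derivative 1) (at z)" for i
    by (auto intro!: derivative_eq_intros)
  with has_field_derivative_prod'[of A "\<lambda>i t. t - c i" z "\<lambda>_. 1"] assms show ?thesis
    by simp
qed

lemma has_field_derivative_divide_log:
  fixes f g :: "'a \<Rightarrow> 'a::real_normed_field"
  assumes "(f has_field_derivative f z * a) (at z)" "(g has_field_derivative g z * b) (at z)"
    and "g z \<noteq> 0"
  shows "((\<lambda>t. f t / g t) has_field_derivative (f z / g z) * (a - b)) (at z)"
proof -
  have "(f z * a * g z - f z * (g z * b)) / (g z * g z) = (f z / g z) * (a - b)"
    using assms(3) by (simp add: field_simps)
  with DERIV_divide[OF assms] show ?thesis by simp
qed

lemma residue_prod_quotient_double_pole:
  fixes a :: "'i \<Rightarrow> complex" and b :: "'j \<Rightarrow> complex"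
  assumes "finite J" "z \<notin> a ` I" "z \<notin> b ` J"
  shows "residue (\<lambda>t. t * ((\<Prod>i\<in>I. t - a i) / (\<Prod>i\<in>J. t - b i)) / (t - z) ^ 2) z
       = (\<Prod>i\<in>I. z - a i) / (\<Prod>i\<in>J. z - b i)
         * (1 + z * ((\<Sum>i\<in>I. 1 / (z - a i)) - (\<Sum>i\<in>J. 1 / (z - b i))))"
proof -
  define g where "g t = (\<Prod>i\<in>I. t - a i) / (\<Prod>i\<in>J. t - b i)" for t
  have "open (- b ` J)" using assms(1) by (intro open_Compl finite_imp_closed) auto
  have "(\<lambda>t. t * g t) holomorphic_on - b ` J"
    unfolding g_def using assms(1) by (intro holomorphic_intros) auto
  have "(g has_field_derivative g z * ((\<Sum>i\<in>I. 1 / (z - a i)) - (\<Sum>i\<in>J. 1 / (z - b i)))) (at z)"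
    unfolding g_def using assms
    by (intro has_field_derivative_divide_log has_field_derivative_prod_diff) auto
  from DERIV_mult[OF DERIV_ident this]
  have "deriv (\<lambda>t. t * g t) z = g z * (1 + z * ((\<Sum>i\<in>I. 1 / (z - a i)) - (\<Sum>i\<in>J. 1 / (z - b i))))"
    by (simp add: DERIV_imp_deriv algebra_simps)
  with residue_holomorphic_over_power[OF \<open>open _\<close> _ \<open>_ holomorphic_on _\<close>, of z 1] assms(3)
  show ?thesis unfolding g_def by (simp add: power2_eq_square)
qed

lemma residue_prod_quotient_simple_pole:
  fixes a :: "'i \<Rightarrow> complex" and b :: "'j \<Rightarrow> complex"
  assumes "finite J" "z \<notin> b ` J"
  shows "residue (\<lambda>t. t * ((\<Prod>i\<in>I. t - a i) / (\<Prod>i\<in>J. t - b i)) / (t - z)) z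
       = z * ((\<Prod>i\<in>I. z - a i) / (\<Prod>i\<in>J. z - b i))"
proof -
  have "open (- b ` J)" using assms(1) by (intro open_Compl finite_imp_closed) auto
  moreover have "(\<lambda>t. t * ((\<Prod>i\<in>I. t - a i) / (\<Prod>i\<in>J. t - b i))) holomorphic_on - b ` J"
    using assms(1) by (intro holomorphic_intros) auto
  ultimately show ?thesis
    using residue_holomorphic_over_power[of "- b ` J" z
            "\<lambda>t. t * ((\<Prod>i\<in>I. t - a i) / (\<Prod>i\<in>J. t - b i))" 0] assms(2)
    by simp
qed

lemma prod_of_nat_add_eq_fact_div_fact:
  "(\<Prod>i=1..m. of_nat k + of_nat i :: 'a::field_char_0) = fact (m + k) / fact k"
  by (induction m) (simp_all add: algebra_simps)

lemma sum_inverse_of_nat_add_eq_harm_diff: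
  "(\<Sum>i=1..m. 1 / (of_nat k + of_nat i :: 'a::real_normed_field)) = harm (m + k) - harm k"
  by (induction m) (simp_all add: harm_Suc inverse_eq_divide add_ac)

lemma prod_of_nat_diff_remove:
  assumes "k \<le> m"
  shows "(\<Prod>i\<in>{0..m}-{k}. of_nat k - of_nat i :: 'a::field_char_0) = (-1) ^ (m - k) * fact k * fact (m - k)"
  using assms
proof (induction m rule: dec_induct)
  case base
  have "(\<Prod>i\<in>{0..k}-{k}. of_nat k - of_nat i :: 'a) = (\<Prod>i<k. of_nat (k - i))"
    by (intro prod.cong) (auto simp: of_nat_diff)
  also have "\<dots> = fact k"
    by (simp add: fact_prod_rev atLeast0LessThan del: of_nat_diff)
  finally show ?case by simp
next
  case (step m)
  have "{0..Suc m}-{k} = insert (Suc m) ({0..m}-{k})" using step by auto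
  thus ?case using step by (simp add: Suc_diff_le of_nat_diff algebra_simps)
qed

lemma sum_inverse_of_nat_diff_remove:
  assumes "k \<le> m"
  shows "(\<Sum>i\<in>{0..m}-{k}. 1 / (of_nat k - of_nat i :: 'a::real_normed_field)) = harm k - harm (m - k)"
  using assms
proof (induction m rule: dec_induct)
  case base
  have "(\<Sum>i\<in>{0..k}-{k}. 1 / (of_nat k - of_nat i :: 'a)) = (\<Sum>i<k. 1 / of_nat (k - i))"
    by (intro sum.cong) (auto simp: of_nat_diff)
  also have "\<dots> = (\<Sum>i=1..k. 1 / of_nat i)"
    by (rule sum.reindex_bij_witness[where i = "\<lambda>i. k - i" and j = "\<lambda>i. k - i"]) auto
  finally show ?case by (simp add: harm_def inverse_eq_divide)
next
  case (step m)
  have "{0..Suc m}-{k} = insert (Suc m) ({0..m}-{k})" using step by auto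
  hence split: "(\<Sum>i\<in>{0..Suc m}-{k}. 1 / (of_nat k - of_nat i :: 'a))
      = 1 / (of_nat k - of_nat (Suc m)) + (\<Sum>i\<in>{0..m}-{k}. 1 / (of_nat k - of_nat i))"
    by simp
  have "of_nat k - of_nat (Suc m) = - (of_nat (Suc (m - k)) :: 'a)"
    using step by (simp add: of_nat_diff)
  hence new_term: "1 / (of_nat k - of_nat (Suc m) :: 'a) = - inverse (of_nat (Suc (m - k)))"
    by (simp only: divide_minus_right inverse_eq_divide)
  show ?case
    unfolding split new_term step.IH using step by (simp add: Suc_diff_le harm_Suc)
qed

lemma prod_of_nat_diff_eq_fact_div_fact:
  assumes "n < k"
  shows "(\<Prod>i=0..n. of_nat k - of_nat i :: 'a::field_char_0) = fact k / fact (k - Suc n)"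
  using assms
proof (induction n)
  case 0
  thus ?case by (cases k) auto
next
  case (Suc n)
  hence k: "k - Suc n = Suc (k - Suc (Suc n))" by simp
  have "(\<Prod>i=0..Suc n. of_nat k - of_nat i :: 'a) = of_nat (k - Suc n) * (fact k / fact (k - Suc n))"
    using Suc by (simp add: of_nat_diff)
  also have "\<dots> = fact k / fact (k - Suc (Suc n))"
    unfolding k fact_Suc by (simp del: of_nat_Suc)
  finally show ?case .
qed

lemma prod_of_nat_add_remove:
  assumes "j \<in> {1..m}"
  shows "(\<Prod>i\<in>{1..m}-{j}. of_nat k + of_nat i :: 'a::field_char_0)
       = fact (m + k) / (fact k * (of_nat k + of_nat j))"
proof -
  have "(\<Prod>i\<in>{1..m}-{j}. of_nat k + of_nat i :: 'a) = (\<Prod>i=1..m. of_nat k + of_nat i) / (of_nat k + of_nat j)"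
    using assms by (simp add: prod_diff1 flip: of_nat_add)
  thus ?thesis unfolding prod_of_nat_add_eq_fact_div_fact by simp
qed

lemma sum_inverse_of_nat_add_remove:
  assumes "j \<in> {1..m}"
  shows "(\<Sum>i\<in>{1..m}-{j}. 1 / (of_nat k + of_nat i :: 'a::real_normed_field))
       = harm (m + k) - harm k - 1 / (of_nat k + of_nat j)"
proof -
  have "(\<Sum>i\<in>{1..m}-{j}. 1 / (of_nat k + of_nat i :: 'a))
      = (\<Sum>i=1..m. 1 / (of_nat k + of_nat i)) - 1 / (of_nat k + of_nat j)"
    using assms by (simp add: sum_diff1)
  thus ?thesis unfolding sum_inverse_of_nat_add_eq_harm_diff .
qed

lemma minus_one_power_diff_mult:
  assumes "k \<le> n" "k \<le> m"
  shows "(-1 :: 'a::ring_1) ^ (m - k) * (-1) ^ (n - k) = (-1) ^ (m + n)"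
proof -
  have "m + n = (m - k) + (n - k) + 2 * k" using assms by simp
  hence "(-1 :: 'a) ^ (m + n) = (-1) ^ (m - k) * (-1) ^ (n - k) * ((-1) ^ 2) ^ k"
    by (simp only: power_add power_mult)
  thus ?thesis by simp
qed

lemma prod_of_nat_add_remove_mult_prod:
  assumes "j \<in> {1..m}"
  shows "(\<Prod>i\<in>{1..m}-{j}. of_nat k + of_nat i) * (\<Prod>i=1..n. of_nat k + of_nat i)
       = fact (m + k) * fact (n + k) / (fact k ^ 2 * (of_nat k + of_nat j) :: 'a::field_char_0)"
  unfolding prod_of_nat_add_remove[OF assms] prod_of_nat_add_eq_fact_div_fact
  by (simp add: power2_eq_square)

definition residue_kernel :: "nat \<Rightarrow> nat \<Rightarrow> nat \<Rightarrow> complex \<Rightarrow> complex" where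
  "residue_kernel m n j t =
     t * (\<Prod>i\<in>{1..m}-{j}. t + of_nat i) * (\<Prod>i=1..n. t + of_nat i)
     / ((\<Prod>i=0..m. t - of_nat i) * (\<Prod>i=0..n. t - of_nat i))"

lemma residue_kernel_double_pole:
  assumes "k \<le> n" "n \<le> m" "j \<in> {1..m}"
  defines "z \<equiv> of_nat k :: complex"
  shows "residue (residue_kernel m n j) z =
     (\<Prod>i\<in>{1..m}-{j}. z + of_nat i) * (\<Prod>i=1..n. z + of_nat i)
       / ((\<Prod>i\<in>{0..m}-{k}. z - of_nat i) * (\<Prod>i\<in>{0..n}-{k}. z - of_nat i))
     * (1 + z * ((\<Sum>i\<in>{1..m}-{j}. 1 / (z + of_nat i)) + (\<Sum>i=1..n. 1 / (z + of_nat i))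
          - ((\<Sum>i\<in>{0..m}-{k}. 1 / (z - of_nat i)) + (\<Sum>i\<in>{0..n}-{k}. 1 / (z - of_nat i)))))"
proof -
  define I where "I = ({1..m}-{j}) <+> {1..n}"
  define a :: "nat + nat \<Rightarrow> complex" where "a = case_sum (\<lambda>i. - of_nat i) (\<lambda>i. - of_nat i)"
  define J where "J = ({0..m}-{k}) <+> ({0..n}-{k})"
  define b :: "nat + nat \<Rightarrow> complex" where "b = case_sum of_nat of_nat"
  have "k \<in> {0..m}" "k \<in> {0..n}" using assms(1,2) by auto
  have "residue_kernel m n j = (\<lambda>t. t * ((\<Prod>i\<in>I. t - a i) / (\<Prod>i\<in>J. t - b i)) / (t - z) ^ 2)"
  proof
    fix t
    have "(\<Prod>i=0..m. t - of_nat i) = (t - z) * (\<Prod>i\<in>{0..m}-{k}. t - of_nat i)"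
      "(\<Prod>i=0..n. t - of_nat i) = (t - z) * (\<Prod>i\<in>{0..n}-{k}. t - of_nat i)"
      using \<open>k \<in> {0..m}\<close> \<open>k \<in> {0..n}\<close> unfolding z_def by (simp_all add: prod.remove)
    thus "residue_kernel m n j t = t * ((\<Prod>i\<in>I. t - a i) / (\<Prod>i\<in>J. t - b i)) / (t - z) ^ 2"
      unfolding residue_kernel_def I_def a_def J_def b_def
      by (simp add: prod.Plus power2_eq_square mult_ac)
  qed
  moreover have "z \<notin> a ` I" "z \<notin> b ` J"
    unfolding z_def I_def a_def J_def b_def by (auto simp: eq_neg_iff_add_eq_0 simp flip: of_nat_add)
  ultimately show ?thesis
    using residue_prod_quotient_double_pole[where a = a and b = b and I = I and J = J and z = z]
    by (simp add: I_def a_def J_def b_def prod.Plus sum.Plus)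
qed

lemma residue_kernel_at_low_pole:
  assumes "k \<le> n" "n \<le> m" "j \<in> {1..m}"
  shows "residue (residue_kernel m n j) (of_nat k) = (-1) ^ (m + n) *
    (of_nat ((m + k) choose k) * of_nat (m choose k) * of_nat ((n + k) choose k) * of_nat (n choose k)
     * ((1 + of_nat k * (harm (m + k) + harm (m - k) + harm (n + k) + harm (n - k) - 4 * harm k))
          / (of_nat k + of_nat j) - of_nat k / (of_nat k + of_nat j) ^ 2))"
proof -
  define w :: complex where "w = of_nat k + of_nat j"
  have "k \<le> m" using assms by simp
  have "(\<Prod>i\<in>{0..m}-{k}. of_nat k - of_nat i) * (\<Prod>i\<in>{0..n}-{k}. of_nat k - of_nat i)
      = ((-1) ^ (m - k) * (-1) ^ (n - k)) * (fact k ^ 2 * (fact (m - k) * fact (n - k)) :: complex)"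
    unfolding prod_of_nat_diff_remove[OF \<open>k \<le> m\<close>] prod_of_nat_diff_remove[OF assms(1)]
    by (simp add: power2_eq_square mult_ac)
  hence den: "(\<Prod>i\<in>{0..m}-{k}. of_nat k - of_nat i) * (\<Prod>i\<in>{0..n}-{k}. of_nat k - of_nat i)
      = (-1) ^ (m + n) * (fact k ^ 2 * (fact (m - k) * fact (n - k)) :: complex)"
    unfolding minus_one_power_diff_mult[OF assms(1) \<open>k \<le> m\<close>] .
  have binomials: "of_nat ((m + k) choose k) * of_nat (m choose k) * of_nat ((n + k) choose k) * of_nat (n choose k)
      = fact (m + k) * fact (n + k) / (fact k ^ 4 * (fact (m - k) * fact (n - k)) :: complex)"
    using \<open>k \<le> m\<close> assms(1) by (simp add: binomial_fact power4_eq_xxxx)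
  have "w \<noteq> 0" unfolding w_def using assms(3) by (simp flip: of_nat_add)
  show ?thesis
    unfolding residue_kernel_double_pole[OF assms] prod_of_nat_add_remove_mult_prod[OF assms(3)] den
      sum_inverse_of_nat_add_remove[OF assms(3)] sum_inverse_of_nat_add_eq_harm_diff
      sum_inverse_of_nat_diff_remove[OF \<open>k \<le> m\<close>] sum_inverse_of_nat_diff_remove[OF assms(1)]
      binomials w_def[symmetric]
    using \<open>w \<noteq> 0\<close>
    by (cases "even (m + n)") (simp_all add: field_simps power2_eq_square power4_eq_xxxx)
qed

lemma residue_kernel_simple_pole:
  assumes "n < k" "k \<le> m"
  defines "z \<equiv> of_nat k :: complex"
  shows "residue (residue_kernel m n j) z =
     z * ((\<Prod>i\<in>{1..m}-{j}. z + of_nat i) * (\<Prod>i=1..n. z + of_nat i)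
          / ((\<Prod>i\<in>{0..m}-{k}. z - of_nat i) * (\<Prod>i=0..n. z - of_nat i)))"
proof -
  define I where "I = ({1..m}-{j}) <+> {1..n}"
  define a :: "nat + nat \<Rightarrow> complex" where "a = case_sum (\<lambda>i. - of_nat i) (\<lambda>i. - of_nat i)"
  define J where "J = ({0..m}-{k}) <+> {0..n}"
  define b :: "nat + nat \<Rightarrow> complex" where "b = case_sum of_nat of_nat"
  have "residue_kernel m n j = (\<lambda>t. t * ((\<Prod>i\<in>I. t - a i) / (\<Prod>i\<in>J. t - b i)) / (t - z))"
  proof
    fix t
    have "(\<Prod>i=0..m. t - of_nat i) = (t - z) * (\<Prod>i\<in>{0..m}-{k}. t - of_nat i)"
      using assms(2) unfolding z_def by (simp add: prod.remove)
    thus "residue_kernel m n j t = t * ((\<Prod>i\<in>I. t - a i) / (\<Prod>i\<in>J. t - b i)) / (t - z)"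
      unfolding residue_kernel_def I_def a_def J_def b_def by (simp add: prod.Plus mult_ac)
  qed
  moreover have "z \<notin> b ` J"
    unfolding z_def J_def b_def using assms(1) by auto
  ultimately show ?thesis
    using residue_prod_quotient_simple_pole[where a = a and b = b and I = I and J = J and z = z]
    by (simp add: I_def a_def J_def b_def prod.Plus)
qed

lemma residue_kernel_at_high_pole:
  assumes "n < k" "k \<le> m" "j \<in> {1..m}"
  shows "residue (residue_kernel m n j) (of_nat k) = (-1) ^ (m + n) *
    ((-1) ^ (k - n) * of_nat ((m + k) choose k) * of_nat (m choose k) * of_nat ((n + k) choose k)
     / of_nat ((k - 1) choose n) * (1 / (of_nat k + of_nat j)))"
proof -
  define z :: complex where "z = of_nat k"
  define w where "w = z + of_nat j"
  obtain d where d: "k = Suc d" using assms(1) by (cases k) auto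
  have "fact k = z * fact (k - 1)" "z \<noteq> 0" unfolding z_def d by (simp_all del: of_nat_Suc)
  hence binomials: "of_nat ((m + k) choose k) * of_nat (m choose k) * of_nat ((n + k) choose k)
      / of_nat ((k - 1) choose n)
      = z * fact (m + k) * fact (n + k) * fact (k - Suc n) / (fact k ^ 4 * fact (m - k))"
    using assms by (simp add: binomial_fact power4_eq_xxxx field_simps)
  have "m + n + (k - n) = (m - k) + 2 * k" using assms by simp
  hence "(-1 :: complex) ^ (m + n) * (-1) ^ (k - n) = (-1) ^ ((m - k) + 2 * k)"
    by (simp only: power_add[symmetric])
  hence sign: "(-1 :: complex) ^ (m + n) * (-1) ^ (k - n) = (-1) ^ (m - k)"
    by (simp add: power_add power_mult)
  have "w \<noteq> 0" unfolding w_def z_def using assms(3) by (simp flip: of_nat_add)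
  have reassoc: "s * (t * B1 * B2 * B3 / B4 * u) = (s * t) * (B1 * B2 * B3 / B4) * u"
    for s t B1 B2 B3 B4 u :: complex
    by simp
  show ?thesis
    unfolding residue_kernel_simple_pole[OF assms(1,2)] prod_of_nat_add_remove_mult_prod[OF assms(3)]
      prod_of_nat_diff_remove[OF assms(2)] prod_of_nat_diff_eq_fact_div_fact[OF assms(1)]
    unfolding z_def[symmetric] w_def[symmetric] reassoc sign binomials
    using \<open>w \<noteq> 0\<close> \<open>z \<noteq> 0\<close>
    by (cases "even (m - k)") (simp_all add: field_simps power2_eq_square power4_eq_xxxx)
qed

lemma sum_residues_residue_kernel:
  assumes "n \<le> m" "j \<in> {1..m}"
  shows "(\<Sum>k=0..m. residue (residue_kernel m n j) (of_nat k)) = 0"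
proof -
  define I where "I = ({0..m}-{j}) <+> {1..n}"
  define a :: "nat + nat \<Rightarrow> complex" where "a = case_sum (\<lambda>i. - of_nat i) (\<lambda>i. - of_nat i)"
  define J where "J = {0..m} <+> {0..n}"
  define b :: "nat + nat \<Rightarrow> complex" where "b = case_sum of_nat of_nat"
  have "{0..m}-{j} = insert 0 ({1..m}-{j})" using assms(2) by auto
  hence "residue_kernel m n j = (\<lambda>t. (\<Prod>i\<in>I. t - a i) / (\<Prod>i\<in>J. t - b i))"
    unfolding residue_kernel_def I_def a_def J_def b_def by (auto simp: prod.Plus mult_ac)
  moreover have "card I + 2 \<le> card J"
    using assms unfolding I_def J_def by (simp add: card_Plus)
  ultimately have "(\<Sum>p\<in>b ` J. residue (residue_kernel m n j) p) = 0"
    using sum_residues_rational_function_eq_0[where a = a and b = b and I = I and J = J]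
    by (simp add: I_def J_def)
  moreover have "b ` J = of_nat ` {0..m}"
    using assms(1) unfolding b_def J_def by (auto simp: Plus_def image_Un image_image)
  ultimately show ?thesis by (simp add: sum.reindex inj_on_def)
qed

definition binomial_harmonic_form :: "nat \<Rightarrow> nat \<Rightarrow> (nat \<Rightarrow> rat) \<Rightarrow> (nat \<Rightarrow> rat) \<Rightarrow> rat" where
  "binomial_harmonic_form m n u v =
     (\<Sum>k = 0..n. of_nat ((m + k) choose k) * of_nat (m choose k)
              * of_nat ((n + k) choose k) * of_nat (n choose k)
           * ((1 + of_nat k * (gharm 1 (m + k) + gharm 1 (m - k) + gharm 1 (n + k)
                 + gharm 1 (n - k) - 4 * gharm 1 k)) * u k
              - of_nat k * v k))
   + (\<Sum>k = n + 1..m. (-1) ^ (k - n) * of_nat ((m + k) choose k) * of_nat (m choose k)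
              * of_nat ((n + k) choose k) / of_nat ((k - 1) choose n) * u k)"

lemma binomial_harmonic_form_add:
  "binomial_harmonic_form m n (\<lambda>k. u k + u' k) (\<lambda>k. v k + v' k)
   = binomial_harmonic_form m n u v + binomial_harmonic_form m n u' v'"
proof -
  have "a * (l * (x + x') - c * (y + y')) = a * (l * x - c * y) + a * (l * x' - c * y')"
    for a l c x x' y y' :: rat
    by (simp add: algebra_simps)
  thus ?thesis
    unfolding binomial_harmonic_form_def by (simp only: distrib_left sum.distrib add_ac)
qed

lemma binomial_harmonic_form_scale:
  "binomial_harmonic_form m n (\<lambda>k. c * u k) (\<lambda>k. c * v k) = c * binomial_harmonic_form m n u v"
  unfolding binomial_harmonic_form_def distrib_left sum_distrib_left
  by (intro arg_cong2[where f = "(+)"] sum.cong refl) (simp_all add: algebra_simps)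

lemma binomial_harmonic_form_sum:
  "binomial_harmonic_form m n (\<lambda>k. \<Sum>j\<in>A. u j k) (\<lambda>k. \<Sum>j\<in>A. v j k)
   = (\<Sum>j\<in>A. binomial_harmonic_form m n (u j) (v j))"
proof (induction A rule: infinite_finite_induct)
  case (insert j A)
  thus ?case by (simp add: binomial_harmonic_form_add)
qed (simp_all add: binomial_harmonic_form_def)

lemma of_rat_gharm_1: "of_rat (gharm 1 n) = harm n"
  by (simp add: gharm_def harm_def of_rat_sum of_rat_divide inverse_eq_divide)

lemma binomial_harmonic_form_reciprocal_eq_0:
  assumes "n \<le> m" "j \<in> {1..m}"
  shows "binomial_harmonic_form m n (\<lambda>k. 1 / (of_nat k + of_nat j)) (\<lambda>k. 1 / (of_nat k + of_nat j) ^ 2) = 0"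
proof -
  have "(\<Sum>k=0..m. residue (residue_kernel m n j) (of_nat k))
      = (\<Sum>k=0..n. residue (residue_kernel m n j) (of_nat k))
        + (\<Sum>k=n+1..m. residue (residue_kernel m n j) (of_nat k))"
    using sum.ub_add_nat[of 0 n _ "m - n"] assms(1) by simp
  also have "\<dots> = (-1) ^ (m + n) * of_rat (binomial_harmonic_form m n
      (\<lambda>k. 1 / (of_nat k + of_nat j)) (\<lambda>k. 1 / (of_nat k + of_nat j) ^ 2))"
    unfolding binomial_harmonic_form_def distrib_left of_rat_add
    using assms
    by (intro arg_cong2[where f = "(+)"])
       (auto simp: sum_distrib_left of_rat_sum of_rat_add of_rat_mult of_rat_divide of_rat_diff
          of_rat_power of_rat_gharm_1[simplified] residue_kernel_at_low_pole
          residue_kernel_at_high_pole intro!: sum.cong)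
  finally show ?thesis using sum_residues_residue_kernel[OF assms] by simp
qed

lemma gharm_diff_eq_sum:
  assumes "1 \<le> a" "a \<le> b + 1"
  shows "gharm r (k + b) - gharm r (k + a - 1) = (\<Sum>j=a..b. 1 / (of_nat k + of_nat j) ^ r)"
proof -
  have "gharm r (k + b) = gharm r (k + a - 1) + (\<Sum>i=k + a..k + b. 1 / of_nat i ^ r)"
    unfolding gharm_def using assms by (subst sum.union_disjoint[symmetric]) (auto intro!: sum.cong)
  also have "(\<Sum>i=k + a..k + b. 1 / of_nat i ^ r) = (\<Sum>j=a..b. 1 / (of_nat k + of_nat j :: rat) ^ r)"
    by (rule sum.reindex_bij_witness[where i = "\<lambda>j. k + j" and j = "\<lambda>i. i - k"]) auto
  finally show ?thesis by simp
qed

lemma Uk_eq_sum: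
  assumes "n \<le> m" "m < l" "l \<le> 2 * n"
  shows "Uk c1 c2 l m n r k = c1 * (\<Sum>j=l-n..n. 1 / (of_nat k + of_nat j) ^ r)
                            + c2 * (\<Sum>j=l-m..m. 1 / (of_nat k + of_nat j) ^ r)"
proof -
  have "k + l - n - 1 = k + (l - n) - 1" "k + l - m - 1 = k + (l - m) - 1" using assms by auto
  moreover have "gharm r (k + n) - gharm r (k + (l - n) - 1) = (\<Sum>j=l-n..n. 1 / (of_nat k + of_nat j) ^ r)"
    "gharm r (k + m) - gharm r (k + (l - m) - 1) = (\<Sum>j=l-m..m. 1 / (of_nat k + of_nat j) ^ r)"
    by (rule gharm_diff_eq_sum; use assms in linarith)+
  ultimately show ?thesis unfolding Uk_def by simp
qed

theorem theorem1p3: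
  fixes l m n :: nat and c1 c2 :: rat
  assumes "0 < n" and "m < l" and "n \<le> m" and "l \<le> 2 * n"
  shows "(\<Sum>k = 0..n. of_nat ((m + k) choose k) * of_nat (m choose k)
              * of_nat ((n + k) choose k) * of_nat (n choose k)
           * ((1 + of_nat k * (gharm 1 (m + k) + gharm 1 (m - k) + gharm 1 (n + k)
                 + gharm 1 (n - k) - 4 * gharm 1 k)) * Uk c1 c2 l m n 1 k
              - of_nat k * Uk c1 c2 l m n 2 k))
       + (\<Sum>k = n + 1..m. (-1) ^ (k - n) * of_nat ((m + k) choose k) * of_nat (m choose k)
              * of_nat ((n + k) choose k) / of_nat ((k - 1) choose n) * Uk c1 c2 l m n 1 k)
       = 0"
proof -
  have Uk: "Uk c1 c2 l m n r = (\<lambda>k. c1 * (\<Sum>j=l-n..n. 1 / (of_nat k + of_nat j) ^ r)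
                                 + c2 * (\<Sum>j=l-m..m. 1 / (of_nat k + of_nat j) ^ r))" for r
    using Uk_eq_sum[OF assms(3,2,4)] by blast
  have "binomial_harmonic_form m n (\<lambda>k. 1 / (of_nat k + of_nat j) ^ 1)
          (\<lambda>k. 1 / (of_nat k + of_nat j) ^ 2) = 0" if "j \<in> {l-n..n} \<union> {l-m..m}" for j
    using binomial_harmonic_form_reciprocal_eq_0[OF assms(3), of j] that assms by auto
  hence "binomial_harmonic_form m n (Uk c1 c2 l m n 1) (Uk c1 c2 l m n 2) = 0"
    unfolding Uk binomial_harmonic_form_add binomial_harmonic_form_scale binomial_harmonic_form_sum
    by simp
  thus ?thesis unfolding binomial_harmonic_form_def .
qed

end
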